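(* Consider the control problem described in the context, and assume that the set $\mathfrak U$ of admissible controls is weakly compact in $L_2^m[0,1]$ and the goal set $\mathbf Q$ is closed in $\mathbb R^n$. Then the problem has a solution: there exists $\mathbf u^0(\cdot)\in\mathfrak U$ with $\varphi(\mathbf u^0(\cdot))=\max_{\mathbf u(\cdot)\in\mathfrak U}\varphi(\mathbf u(\cdot))$.
   Context: Let $(\Omega,\mathfrak F,\mathbf P)$ be a complete probability space, $\xi_1,\dots,\xi_N$ real random variables on it, and $0=t_0<t_1<\dots<t_N=1$. Define the random process $\xi(t,\omega)=\xi_i(\omega)$ for $t\in[t_{i-1},t_i)$, $i=1,\dots,N$. Let $A(t)$, $B(t)$, $\mathbf f(t)$ be deterministic matrices of sizes $n\times n$, $n\times m$, $n\times 1$ with Lebesgue-summable entries on $[0,1]$, the entries of $B$ being moreover square-summable; let $\mathbf x_0\in\mathbb R^n$ be nonrandom and $\mathbf Q\subset\mathbb R^n$ a nonrandom Borel set. For a measurable deterministic control $\mathbf u(\cdot)\in L_2^m[0,1]$, $\mathbf x_u(t)$ denotes the (unique, with absolutely continuous trajectories) solution of $$\tfrac{d}{dt}\mathbf x=A(t)\mathbf x+\xi(t)B(t)\mathbf u(t)+\mathbf f(t),\ 0\le t\le1,\qquad \mathbf x(0)=\mathbf x_0,$$ and the cost functional is $\varphi(\mathbf u(\cdot))=\mathbf P(\mathbf x_u(1)\in\mathbf Q)$, to be maximized over the set $\mathfrak U$ of admissible controls, which consists of measurable deterministic functions $\mathbf u:[0,1]\to\mathbf V$ for a fixed set $\mathbf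 V\subset\mathbb R^m$ (belonging to $L_2^m[0,1]$). *)

theory Defs
  imports "HOL-Probability.Probability"
begin

definition L2_01 :: "(real \<Rightarrow> 'b::euclidean_space) \<Rightarrow> bool" where
  "L2_01 g \<longleftrightarrow> g measurable_on {0..1} \<and> (\<lambda>s. (norm (g s))\<^sup>2) integrable_on {0..1}"

definition weak_L2_topology :: "(real \<Rightarrow> real^'m) topology" where
  "weak_L2_topology = topology_generated_by
     {{u. integral {0..1} (\<lambda>s. u s \<bullet> g s) \<in> W} | g W. L2_01 g \<and> open W}"

definition xi_proc :: "nat \<Rightarrow> (nat \<Rightarrow> real) \<Rightarrow> (nat \<Rightarrow> 'a \<Rightarrow> real) \<Rightarrow> real \<Rightarrow> 'a \<Rightarrow> real" where
  "xi_proc N tt \<xi> s \<omega> = (\<Sum>i\<in>{1..N}. if tt (i - 1) \<le> s \<and> s < tt i then \<xi> i \<omega> else 0)"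

text \<open>x is an (absolutely continuous, Caratheodory) solution on [0,1] of
  x' = A x + xi B u + f, x(0) = x0, for the fixed outcome w.\<close>
definition is_solution ::
  "nat \<Rightarrow> (nat \<Rightarrow> real) \<Rightarrow> (nat \<Rightarrow> 'a \<Rightarrow> real) \<Rightarrow> (real \<Rightarrow> real^'n^'n) \<Rightarrow> (real \<Rightarrow> real^'m^'n)
   \<Rightarrow> (real \<Rightarrow> real^'n) \<Rightarrow> real^'n \<Rightarrow> (real \<Rightarrow> real^'m) \<Rightarrow> 'a \<Rightarrow> (real \<Rightarrow> real^'n) \<Rightarrow> bool" where
  "is_solution N tt \<xi> A B f x0 u \<omega> x \<longleftrightarrow>
     (let rhs = (\<lambda>r. A r *v x r + xi_proc N tt \<xi> r \<omega> *\<^sub>R (B r *v u r) + f r) in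
       rhs absolutely_integrable_on {0..1} \<and>
       (\<forall>s\<in>{0..1}. x s = x0 + integral {0..s} rhs))"

definition terminal_state ::
  "nat \<Rightarrow> (nat \<Rightarrow> real) \<Rightarrow> (nat \<Rightarrow> 'a \<Rightarrow> real) \<Rightarrow> (real \<Rightarrow> real^'n^'n) \<Rightarrow> (real \<Rightarrow> real^'m^'n)
   \<Rightarrow> (real \<Rightarrow> real^'n) \<Rightarrow> real^'n \<Rightarrow> (real \<Rightarrow> real^'m) \<Rightarrow> 'a \<Rightarrow> real^'n" where
  "terminal_state N tt \<xi> A B f x0 u \<omega> =
     (THE y. \<exists>x. is_solution N tt \<xi> A B f x0 u \<omega> x \<and> x 1 = y)"

definition cost ::
  "'a measure \<Rightarrow> nat \<Rightarrow> (nat \<Rightarrow> real) \<Rightarrow> (nat \<Rightarrow> 'a \<Rightarrow> real) \<Rightarrow> (real \<Rightarrow> real^'n^'n) \<Rightarrow> (real \<Rightarrow> real^'m^'n)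
   \<Rightarrow> (real \<Rightarrow> real^'n) \<Rightarrow> real^'n \<Rightarrow> (real^'n) set \<Rightarrow> (real \<Rightarrow> real^'m) \<Rightarrow> real" where
  "cost M N tt \<xi> A B f x0 Q u =
     measure M {\<omega> \<in> space M. terminal_state N tt \<xi> A B f x0 u \<omega> \<in> Q}"

definition admissible :: "(real^'m) set \<Rightarrow> (real \<Rightarrow> real^'m) set" where
  "admissible V = {u. L2_01 u \<and> (\<forall>t\<in>{0..1}. u t \<in> V)}"

end

theory Submission
  imports Defs
begin

(* The proof is the classical "upper semicontinuous function on a compact set"
   argument, in the weak topology of L_2.  The key structural fact is that the
   terminal state is affine in the random values xi_1, ..., xi_N:
       x_u(1) = a0 + \<Sum>_i xi_i W_i(u),
   where every coordinate of W_i(u) has the form \<integral>_0^1 u \<bullet> G with G in L_2.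
   The weights G are obtained from solutions p of the adjoint equation
   p' = -A^T p with p(1) = e_k, by the duality  x(1) \<bullet> e_k = x0 \<bullet> p(0) + \<integral> h \<bullet> p. *)

section \<open>Integrability of products\<close>

lemma absolutely_integrable_continuous_bilinear:
  fixes h :: "'a::euclidean_space \<Rightarrow> 'b::euclidean_space \<Rightarrow> 'c::euclidean_space"
    and g :: "real \<Rightarrow> 'a" and F :: "real \<Rightarrow> 'b"
  assumes "bilinear h" and g: "continuous_on {a..b} g" and F: "F absolutely_integrable_on {a..b}"
  shows "(\<lambda>s. h (g s) (F s)) absolutely_integrable_on {a..b}"
proof (rule absolutely_integrable_bounded_measurable_product[OF assms(1) _ _ _ F])
  show "g \<in> borel_measurable (lebesgue_on {a..b})"
    by (rule continuous_imp_measurable_on_sets_lebesgue[OF g]) auto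
  show "bounded (g ` {a..b})"
    using g compact_Icc compact_continuous_image compact_imp_bounded by blast
qed auto

lemma absolutely_integrable_continuous_mult:
  fixes F g :: "real \<Rightarrow> real"
  assumes "continuous_on {a..b} g" and "F absolutely_integrable_on {a..b}"
  shows "(\<lambda>s. g s * F s) absolutely_integrable_on {a..b}"
  using absolutely_integrable_continuous_bilinear[OF bilinear_times assms] .

lemma absolutely_integrable_continuous_inner:
  fixes Y p :: "real \<Rightarrow> 'a::euclidean_space"
  assumes "Y absolutely_integrable_on {a..b}" and "continuous_on {a..b} p"
  shows "(\<lambda>s. Y s \<bullet> p s) absolutely_integrable_on {a..b}"
proof -
  have "bilinear (\<lambda>x y :: 'a. x \<bullet> y)"
    using bilinear_conv_bounded_bilinear bounded_bilinear_inner by blast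
  from absolutely_integrable_continuous_bilinear[OF this assms(2,1)] show ?thesis
    by (simp add: inner_commute)
qed

lemma absolutely_integrable_matrix_vector:
  fixes K :: "real \<Rightarrow> real^'n^'m" and x :: "real \<Rightarrow> real^'n"
  assumes K: "\<And>i j. (\<lambda>t. K t $ i $ j) absolutely_integrable_on {a..b}"
    and x: "continuous_on {a..b} x"
  shows "(\<lambda>r. K r *v x r) absolutely_integrable_on {a..b}"
proof -
  have row: "(\<lambda>t. K t $ i) absolutely_integrable_on {a..b}" for i
    by (subst absolutely_integrable_on_iff_component) (use K in auto)
  have "(\<lambda>r. K r $ i \<bullet> x r) absolutely_integrable_on {a..b}" for i
    by (rule absolutely_integrable_continuous_inner[OF row x])
  then show ?thesis
    by (subst absolutely_integrable_on_iff_component)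
       (auto simp: matrix_vector_mult_def inner_vec_def mult.commute)
qed

text \<open>The entrywise l1 norm of a matrix; it dominates the operator norm and serves as
  the Lipschitz weight in the Volterra contraction argument.\<close>
definition matrix_abs_sum :: "real^'n^'m \<Rightarrow> real" where
  "matrix_abs_sum K = (\<Sum>i\<in>UNIV. \<Sum>j\<in>UNIV. \<bar>K $ i $ j\<bar>)"

lemma matrix_abs_sum_nonneg: "0 \<le> matrix_abs_sum K"
  unfolding matrix_abs_sum_def by (intro sum_nonneg) auto

lemma matrix_vector_norm_le: "norm (K *v v) \<le> matrix_abs_sum K * norm v"
  using onorm[OF matrix_vector_mul_bounded_linear, of K v] onorm_le_matrix_component_sum[of K]
  unfolding matrix_abs_sum_def by (meson mult_right_mono norm_ge_zero order_trans)

lemma matrix_abs_sum_integrable: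
  fixes K :: "real \<Rightarrow> real^'n^'m"
  assumes "\<And>i j. (\<lambda>t. K t $ i $ j) absolutely_integrable_on {a..b}"
  shows "(\<lambda>t. matrix_abs_sum (K t)) integrable_on {a..b}"
  unfolding matrix_abs_sum_def using assms
  by (intro integrable_sum) (auto simp: absolutely_integrable_on_def)

section \<open>Fubini on a triangle and integration by parts\<close>

text \<open>Lebesgue measure (the completion of Borel measure) is sigma-finite, so
  Fubini's theorem applies to the product of two copies of it.\<close>
lemma sigma_finite_lebesgue: "sigma_finite_measure (lebesgue :: 'a::euclidean_space measure)"
proof -
  obtain C :: "'a set set" where "countable C" "C \<subseteq> sets lborel" "\<Union>C = space lborel"
    "\<forall>c\<in>C. emeasure lborel c \<noteq> \<infinity>"
    using lborel.sigma_finite_countable by blast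
  then show ?thesis
    unfolding sigma_finite_measure_def by (intro exI[of _ C]) auto
qed

lemma set_integral_Icc:
  fixes F :: "real \<Rightarrow> real"
  assumes "F absolutely_integrable_on {a..b}"
  shows "(\<integral>s. indicator {a..b} s * F s \<partial>lebesgue) = integral {a..b} F"
  using set_lebesgue_integral_eq_integral(2)[OF assms] by (simp add: set_lebesgue_integral_def)

lemma integrable_triangle_product:
  fixes F G :: "real \<Rightarrow> real"
  assumes iF: "integrable lebesgue F" and iG: "integrable lebesgue G"
  shows "integrable (lebesgue \<Otimes>\<^sub>M lebesgue) (\<lambda>(s, r). F s * G r * (if s \<le> r then 1 else 0))"
proof -
  interpret L: sigma_finite_measure "lebesgue :: real measure" by (rule sigma_finite_lebesgue)
  interpret P: pair_sigma_finite "lebesgue :: real measure" "lebesgue :: real measure" ..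
  have [measurable]: "F \<in> borel_measurable lebesgue" "G \<in> borel_measurable lebesgue"
    using iF iG by auto
  have id_lebesgue: "(\<lambda>a::real. a) \<in> borel_measurable lebesgue"
    using measurable_completion[of "\<lambda>a::real. a" lborel borel] by simp
  have [measurable]: "(\<lambda>x::real \<times> real. fst x) \<in> borel_measurable (lebesgue \<Otimes>\<^sub>M lebesgue)"
    by (rule measurable_compose[OF measurable_fst id_lebesgue])
  have [measurable]: "(\<lambda>x::real \<times> real. snd x) \<in> borel_measurable (lebesgue \<Otimes>\<^sub>M lebesgue)"
    by (rule measurable_compose[OF measurable_snd id_lebesgue])
  have square: "integrable (lebesgue \<Otimes>\<^sub>M lebesgue) (\<lambda>(s, r). F s * G r)"
  proof (rule P.Fubini_integrable)
    show "(\<lambda>(s, r). F s * G r) \<in> borel_measurable (lebesgue \<Otimes>\<^sub>M lebesgue)" by measurable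
    show "integrable lebesgue (\<lambda>s. \<integral>r. norm (case (s, r) of (s, r) \<Rightarrow> F s * G r) \<partial>lebesgue)"
      using iF by (simp add: abs_mult)
    show "AE s in lebesgue. integrable lebesgue (\<lambda>r. case (s, r) of (s, r) \<Rightarrow> F s * G r)"
      using iG by simp
  qed
  show ?thesis
  proof (rule Bochner_Integration.integrable_bound[OF square])
    show "(\<lambda>(s, r). F s * G r * (if s \<le> r then 1 else 0)) \<in> borel_measurable (lebesgue \<Otimes>\<^sub>M lebesgue)"
      by measurable
  qed (auto simp: abs_mult)
qed

lemma integral_triangle_swap:
  fixes F G :: "real \<Rightarrow> real"
  assumes F: "F absolutely_integrable_on {0..1}" and G: "G absolutely_integrable_on {0..1}"
  shows "integral {0..1} (\<lambda>s. F s * integral {s..1} G) = integral {0..1} (\<lambda>r. integral {0..r} F * G r)"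
proof -
  interpret L: sigma_finite_measure "lebesgue :: real measure" by (rule sigma_finite_lebesgue)
  interpret P: pair_sigma_finite "lebesgue :: real measure" "lebesgue :: real measure" ..
  define F' where "F' s = indicator {0..1::real} s * F s" for s
  define G' where "G' s = indicator {0..1::real} s * G s" for s
  define H where "H s r = F' s * G' r * (if s \<le> r then 1 else 0)" for s r :: real
  have "integrable lebesgue F'" "integrable lebesgue G'"
    using F G unfolding set_integrable_def F'_def G'_def by simp_all
  from integrable_triangle_product[OF this] have triangle: "integrable (lebesgue \<Otimes>\<^sub>M lebesgue) (case_prod H)"
    by (simp add: H_def[abs_def])
  have inner_r: "(\<integral>r. H s r \<partial>lebesgue) = indicator {0..1} s * (F s * integral {s..1} G)" for s
  proof (cases "s \<in> {0..1}")
    case True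
    have "(\<integral>r. H s r \<partial>lebesgue) = F s * (\<integral>r. indicator {s..1} r * G r \<partial>lebesgue)"
      using True unfolding H_def F'_def G'_def
      by (subst integral_mult_right_zero[symmetric], intro Bochner_Integration.integral_cong)
         (auto simp: indicator_def)
    with True show ?thesis
      by (simp add: set_integral_Icc[OF absolutely_integrable_on_subinterval[OF G]])
  qed (simp add: H_def F'_def)
  have inner_s: "(\<integral>s. H s r \<partial>lebesgue) = indicator {0..1} r * (integral {0..r} F * G r)" for r
  proof (cases "r \<in> {0..1}")
    case True
    have "(\<integral>s. H s r \<partial>lebesgue) = (\<integral>s. indicator {0..r} s * F s \<partial>lebesgue) * G r"
      using True unfolding H_def F'_def G'_def
      by (subst integral_mult_left_zero[symmetric], intro Bochner_Integration.integral_cong)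
         (auto simp: indicator_def)
    with True show ?thesis
      by (simp add: set_integral_Icc[OF absolutely_integrable_on_subinterval[OF F]])
  qed (simp add: H_def G'_def)
  have cont_G: "continuous_on {0..1} (\<lambda>s. integral {s..1} G)"
    by (rule indefinite_integral_continuous_1') (use G in \<open>simp add: absolutely_integrable_on_def\<close>)
  have cont_F: "continuous_on {0..1} (\<lambda>s. integral {0..s} F)"
    by (rule indefinite_integral_continuous_1) (use F in \<open>simp add: absolutely_integrable_on_def\<close>)
  have "integral {0..1} (\<lambda>s. F s * integral {s..1} G) = (\<integral>s. (\<integral>r. H s r \<partial>lebesgue) \<partial>lebesgue)"
    using set_integral_Icc[OF absolutely_integrable_continuous_mult[OF cont_G F]]
    by (simp add: inner_r mult.commute)
  also have "\<dots> = (\<integral>r. (\<integral>s. H s r \<partial>lebesgue) \<partial>lebesgue)"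
    by (rule P.Fubini_integral[OF triangle, symmetric])
  also have "\<dots> = integral {0..1} (\<lambda>r. integral {0..r} F * G r)"
    using set_integral_Icc[OF absolutely_integrable_continuous_mult[OF cont_F G]]
    by (simp add: inner_s)
  finally show ?thesis .
qed

text \<open>The integration-by-parts identity behind the state/adjoint duality, for
  the absolutely continuous functions x = \<integral> Y and p = e + \<integral>_s^1 P.\<close>
lemma integral_pairing_by_parts:
  fixes Y P :: "real \<Rightarrow> real^'n" and e :: "real^'n"
  assumes Y: "Y absolutely_integrable_on {0..1}" and P: "P absolutely_integrable_on {0..1}"
  shows "integral {0..1} (\<lambda>s. Y s \<bullet> (e + integral {s..1} P)) =
         integral {0..1} Y \<bullet> e + integral {0..1} (\<lambda>s. integral {0..s} Y \<bullet> P s)"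
proof -
  note integrable = set_lebesgue_integral_eq_integral(1)
  have Yk: "(\<lambda>s. Y s $ k) absolutely_integrable_on {0..1}" for k
    using Y by (subst (asm) absolutely_integrable_on_iff_component) auto
  have Pk: "(\<lambda>s. P s $ k) absolutely_integrable_on {0..1}" for k
    using P by (subst (asm) absolutely_integrable_on_iff_component) auto
  have P_sub: "P integrable_on {s..1}" and Y_sub: "Y integrable_on {0..s}" if "s \<in> {0..1}" for s
    using integrable[OF absolutely_integrable_on_subinterval[OF P, of s 1]]
      integrable[OF absolutely_integrable_on_subinterval[OF Y, of 0 s]] that by auto
  have cont_P: "continuous_on {0..1} (\<lambda>s. integral {s..1} (\<lambda>r. P r $ k))" for k
    by (rule indefinite_integral_continuous_1') (rule integrable[OF Pk])
  have cont_Y: "continuous_on {0..1} (\<lambda>s. integral {0..s} (\<lambda>r. Y r $ k))" for k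
    by (rule indefinite_integral_continuous_1) (rule integrable[OF Yk])
  have i1: "(\<lambda>s. Y s $ k * integral {s..1} (\<lambda>r. P r $ k)) integrable_on {0..1}" for k
    using integrable[OF absolutely_integrable_continuous_mult[OF cont_P Yk]] by (simp add: mult.commute)
  have i2: "(\<lambda>s. integral {0..s} (\<lambda>r. Y r $ k) * P s $ k) integrable_on {0..1}" for k
    using integrable[OF absolutely_integrable_continuous_mult[OF cont_Y Pk]] .
  have i3: "(\<lambda>s. Y s $ k * e $ k) integrable_on {0..1}" for k
    using integrable[OF Yk] by (simp add: integrable_on_mult_left)
  \<comment> \<open>Componentwise, this is the triangle swap of the double integral.\<close>
  have "integral {0..1} (\<lambda>s. Y s \<bullet> (e + integral {s..1} P)) =
        integral {0..1} (\<lambda>s. \<Sum>k\<in>UNIV. Y s $ k * e $ k + Y s $ k * integral {s..1} (\<lambda>r. P r $ k))"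
    by (intro integral_cong) (auto simp: inner_vec_def integral_component_eq_cart[OF P_sub] algebra_simps)
  also have "\<dots> = (\<Sum>k\<in>UNIV. integral {0..1} (\<lambda>s. Y s $ k * e $ k)
                      + integral {0..1} (\<lambda>s. Y s $ k * integral {s..1} (\<lambda>r. P r $ k)))"
    by (subst integral_sum) (auto intro!: integrable_add i1 i3 simp: integral_add[OF i3 i1])
  also have "\<dots> = (\<Sum>k\<in>UNIV. integral {0..1} (\<lambda>s. Y s $ k) * e $ k
                      + integral {0..1} (\<lambda>s. integral {0..s} (\<lambda>r. Y r $ k) * P s $ k))"
    by (simp add: integral_triangle_swap[OF Yk Pk])
  also have "\<dots> = integral {0..1} Y \<bullet> e
                  + (\<Sum>k\<in>UNIV. integral {0..1} (\<lambda>s. integral {0..s} (\<lambda>r. Y r $ k) * P s $ k))"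
    by (simp add: sum.distrib inner_vec_def integral_component_eq_cart[OF integrable[OF Y]])
  also have "(\<Sum>k\<in>UNIV. integral {0..1} (\<lambda>s. integral {0..s} (\<lambda>r. Y r $ k) * P s $ k))
             = integral {0..1} (\<lambda>s. integral {0..s} Y \<bullet> P s)"
    by (subst integral_sum[symmetric])
       (auto intro!: i2 integral_cong simp: inner_vec_def integral_component_eq_cart[OF Y_sub])
  finally show ?thesis .
qed

section \<open>Linear Volterra equations\<close>

lemma volterra_increment_le:
  fixes K :: "real \<Rightarrow> real^'n^'m" and y :: "real \<Rightarrow> real^'n"
  assumes K: "\<And>i j. (\<lambda>t. K t $ i $ j) absolutely_integrable_on {a..b}"
    and y: "continuous_on {a..b} y" and c: "c \<in> {a..b}"
    and bound: "\<And>r. r \<in> {a..b} \<Longrightarrow> norm (y r) \<le> B"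
  shows "norm (integral {a..c} (\<lambda>r. K r *v y r)) \<le> integral {a..b} (\<lambda>r. matrix_abs_sum (K r)) * B"
proof -
  have K_sub: "\<And>i j. (\<lambda>t. K t $ i $ j) absolutely_integrable_on {a..c}"
    using absolutely_integrable_on_subinterval[OF K] c by auto
  have "B \<ge> 0" using bound[of a] c by (auto intro: order_trans[OF norm_ge_zero])
  have "norm (integral {a..c} (\<lambda>r. K r *v y r)) \<le> integral {a..c} (\<lambda>r. matrix_abs_sum (K r) * B)"
  proof (rule integral_norm_bound_integral)
    show "(\<lambda>r. K r *v y r) integrable_on {a..c}"
      using c by (intro set_lebesgue_integral_eq_integral(1) absolutely_integrable_matrix_vector K_sub
          continuous_on_subset[OF y]) auto
    show "(\<lambda>r. matrix_abs_sum (K r) * B) integrable_on {a..c}"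
      by (intro integrable_on_mult_left matrix_abs_sum_integrable K_sub)
    show "norm (K r *v y r) \<le> matrix_abs_sum (K r) * B" if "r \<in> {a..c}" for r
      using that c bound[of r]
      by (intro order_trans[OF matrix_vector_norm_le mult_left_mono[OF _ matrix_abs_sum_nonneg]]) auto
  qed
  also have "\<dots> \<le> integral {a..b} (\<lambda>r. matrix_abs_sum (K r)) * B"
    using c \<open>B \<ge> 0\<close> matrix_abs_sum_integrable[OF K_sub] matrix_abs_sum_integrable[OF K]
    by (auto intro!: mult_right_mono integral_subset_le simp: matrix_abs_sum_nonneg)
  finally show ?thesis .
qed

text \<open>On an interval where \<integral>|K| \<le> 1/2 the map y \<mapsto> g + \<integral>_a^s K y is a contraction
  of the bounded continuous functions (extended beyond [a,b] by clamping);
  its fixed point solves the equation.\<close>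
lemma volterra_local_solution:
  fixes K :: "real \<Rightarrow> real^'n^'n" and g :: "real \<Rightarrow> real^'n"
  assumes K: "\<And>i j. (\<lambda>t. K t $ i $ j) absolutely_integrable_on {a..b}"
    and small: "integral {a..b} (\<lambda>t. matrix_abs_sum (K t)) \<le> 1/2"
    and g: "continuous_on {a..b} g" and ab: "a \<le> b"
  shows "\<exists>y. continuous_on {a..b} y \<and> (\<forall>s\<in>{a..b}. y s = g s + integral {a..s} (\<lambda>r. K r *v y r))"
proof -
  define \<Phi> where "\<Phi> y s = g s + integral {a..s} (\<lambda>r. K r *v y r)" for y :: "real \<Rightarrow> real^'n" and s
  have Ky_int: "(\<lambda>r. K r *v y r) integrable_on {a..c}" if "continuous_on {a..b} y" "c \<in> {a..b}" for y c
    using that absolutely_integrable_on_subinterval[OF K] continuous_on_subset[OF that(1)]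
    by (intro set_lebesgue_integral_eq_integral(1) absolutely_integrable_matrix_vector) auto
  have \<Phi>_cont: "continuous_on {a..b} (\<Phi> y)" if "continuous_on {a..b} y" for y
    unfolding \<Phi>_def using g indefinite_integral_continuous_1[OF Ky_int[OF that]] ab
    by (intro continuous_intros) auto
  define T where "T y = (SOME h. \<forall>x. apply_bcontfun h x = \<Phi> (apply_bcontfun y) (clamp a b x))"
    for y :: "real \<Rightarrow>\<^sub>C (real^'n)"
  have T: "apply_bcontfun (T y) x = \<Phi> (apply_bcontfun y) (clamp a b x)" for y x
  proof -
    have "\<exists>h. \<forall>x. apply_bcontfun h x = \<Phi> (apply_bcontfun y) (clamp a b x)"
      using continuous_on_cbox_bcontfunE[of a b "\<Phi> (apply_bcontfun y)"] \<Phi>_cont[of "apply_bcontfun y"]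
      by (metis cbox_interval continuous_on_subset subset_UNIV continuous_on_apply_bcontfun)
    then show ?thesis unfolding T_def by (rule someI_ex[where P = "\<lambda>h. \<forall>x. _ h x", THEN spec])
  qed
  have contraction: "dist (T y) (T z) \<le> 1/2 * dist y z" for y z
  proof (rule dist_bound)
    fix x
    define c where "c = clamp a b x"
    have c: "c \<in> {a..b}" using clamp_in_interval[of a b x] ab by (auto simp: c_def cbox_interval)
    have int: "(\<lambda>r. K r *v apply_bcontfun y r) integrable_on {a..c}" for y :: "real \<Rightarrow>\<^sub>C (real^'n)"
      using Ky_int[OF _ c] continuous_on_subset by blast
    have "dist (T y x) (T z x)
          = norm (integral {a..c} (\<lambda>r. K r *v (apply_bcontfun y r - apply_bcontfun z r)))"
      by (simp add: T \<Phi>_def c_def[symmetric] dist_norm integral_diff[OF int int]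
          matrix_vector_mult_diff_distrib)
    also have "\<dots> \<le> integral {a..b} (\<lambda>r. matrix_abs_sum (K r)) * dist y z"
    proof (rule volterra_increment_le[OF K _ c])
      show "continuous_on {a..b} (\<lambda>r. apply_bcontfun y r - apply_bcontfun z r)"
        by (intro continuous_intros continuous_on_apply_bcontfun)
      show "norm (apply_bcontfun y r - apply_bcontfun z r) \<le> dist y z" for r
        using dist_bounded[of y r z] by (simp add: dist_norm)
    qed
    also have "\<dots> \<le> 1/2 * dist y z" by (intro mult_right_mono small) simp
    finally show "dist (T y x) (T z x) \<le> 1/2 * dist y z" .
  qed
  obtain y where y: "T y = y" using banach_fix_type[of "1/2" T] contraction by auto
  have "apply_bcontfun y s = \<Phi> (apply_bcontfun y) s" if "s \<in> {a..b}" for s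
    using that T[of y s] by (simp add: y clamp_cancel_cbox cbox_interval)
  then show ?thesis
    by (intro exI[of _ "apply_bcontfun y"]) (auto simp: \<Phi>_def)
qed

lemma volterra_extend_solution:
  fixes K :: "real \<Rightarrow> real^'n^'n" and g x :: "real \<Rightarrow> real^'n"
  assumes K: "\<And>i j. (\<lambda>t. K t $ i $ j) absolutely_integrable_on {0..d}"
    and cd: "0 \<le> c" "c \<le> d" and small: "integral {c..d} (\<lambda>t. matrix_abs_sum (K t)) \<le> 1/2"
    and g: "continuous_on {0..d} g"
    and x: "continuous_on {0..c} x" "\<forall>s\<in>{0..c}. x s = g s + integral {0..s} (\<lambda>r. K r *v x r)"
  shows "\<exists>z. continuous_on {0..d} z \<and> (\<forall>s\<in>{0..d}. z s = g s + integral {0..s} (\<lambda>r. K r *v z r))"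
proof -
  define g' where "g' s = g s + integral {0..c} (\<lambda>r. K r *v x r)" for s
  have K': "\<And>i j. (\<lambda>t. K t $ i $ j) absolutely_integrable_on {c..d}"
    using absolutely_integrable_on_subinterval[OF K] cd by auto
  have "continuous_on {c..d} g'"
    unfolding g'_def using continuous_on_subset[OF g, of "{c..d}"] cd by (auto intro!: continuous_intros)
  then obtain y where y: "continuous_on {c..d} y"
    "\<forall>s\<in>{c..d}. y s = g' s + integral {c..s} (\<lambda>r. K r *v y r)"
    using volterra_local_solution[OF K' small] cd by blast
  have y_c: "y c = x c" using y(2) x(2) cd by (auto simp: g'_def)
  define z where "z s = (if s \<le> c then x s else y s)" for s
  have z_left: "integral {0..s} (\<lambda>r. K r *v z r) = integral {0..s} (\<lambda>r. K r *v x r)" if "s \<le> c" for s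
    using that by (intro integral_cong) (auto simp: z_def)
  have "continuous_on {0..c} z" using x(1) by (rule continuous_on_eq) (auto simp: z_def)
  moreover have "continuous_on {c..d} z" using y(1) by (rule continuous_on_eq) (auto simp: z_def y_c)
  moreover have "{0..d} = {0..c} \<union> {c..d}" using cd by auto
  ultimately have z_cont: "continuous_on {0..d} z"
    by (metis continuous_on_closed_Un closed_atLeastAtMost)
  have "z s = g s + integral {0..s} (\<lambda>r. K r *v z r)" if s: "s \<in> {0..d}" "c < s" for s
  proof -
    have "(\<lambda>t. K t $ i $ j) absolutely_integrable_on {0..s}" for i j
      using absolutely_integrable_on_subinterval[OF K] s by auto
    moreover have "continuous_on {0..s} z" using continuous_on_subset[OF z_cont] s by auto
    ultimately have "(\<lambda>r. K r *v z r) integrable_on {0..s}"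
      by (intro set_lebesgue_integral_eq_integral(1) absolutely_integrable_matrix_vector)
    then have "integral {0..s} (\<lambda>r. K r *v z r)
               = integral {0..c} (\<lambda>r. K r *v z r) + integral {c..s} (\<lambda>r. K r *v z r)"
      using Henstock_Kurzweil_Integration.integral_combine[of 0 c s] cd s by force
    also have "integral {c..s} (\<lambda>r. K r *v z r) = integral {c..s} (\<lambda>r. K r *v y r)"
      by (intro integral_cong) (auto simp: z_def y_c)
    finally show ?thesis using y(2) s z_left[of c] by (auto simp: z_def g'_def)
  qed
  moreover have "z s = g s + integral {0..s} (\<lambda>r. K r *v z r)" if "s \<in> {0..d}" "s \<le> c" for s
    using that x(2) z_left by (auto simp: z_def)
  ultimately show ?thesis
    using z_cont by (intro exI[of _ z]) (metis not_le)
qed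

text \<open>Global existence for x(s) = g(s) + \<integral>_0^s K(r) x(r) dr on [0,1]: the indefinite
  integral of |K| is uniformly continuous, so [0,1] splits into finitely many
  steps on each of which the local contraction argument applies.\<close>
lemma volterra_solution_exists:
  fixes K :: "real \<Rightarrow> real^'n^'n" and g :: "real \<Rightarrow> real^'n"
  assumes K: "\<And>i j. (\<lambda>t. K t $ i $ j) absolutely_integrable_on {0..1}"
    and g: "continuous_on {0..1} g"
  shows "\<exists>x. continuous_on {0..1} x \<and> (\<forall>s\<in>{0..1}. x s = g s + integral {0..s} (\<lambda>r. K r *v x r))"
proof -
  define \<alpha> where "\<alpha> s = integral {0..s} (\<lambda>t. matrix_abs_sum (K t))" for s
  have K_int: "(\<lambda>t. matrix_abs_sum (K t)) integrable_on {0..1}"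
    by (rule matrix_abs_sum_integrable[OF K])
  have "uniformly_continuous_on {0..1} \<alpha>"
    unfolding \<alpha>_def by (intro compact_uniformly_continuous indefinite_integral_continuous_1 K_int) simp
  then obtain \<delta> where \<delta>: "\<delta> > 0"
    "\<And>s t. s \<in> {0..1} \<Longrightarrow> t \<in> {0..1} \<Longrightarrow> dist t s < \<delta> \<Longrightarrow> dist (\<alpha> t) (\<alpha> s) < 1/2"
    unfolding uniformly_continuous_on_def by (metis half_gt_zero_iff zero_less_one)
  define solvable where "solvable c \<longleftrightarrow> (\<exists>x. continuous_on {0..c} x
      \<and> (\<forall>s\<in>{0..c}. x s = g s + integral {0..s} (\<lambda>r. K r *v x r)))" for c
  define step where "step k = min 1 (real k * \<delta> / 2)" for k
  have "solvable (step k)" for k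
  proof (induction k)
    case 0
    show ?case unfolding solvable_def step_def by (intro exI[of _ g]) auto
  next
    case (Suc k)
    have bounds: "0 \<le> step k" "step k \<le> step (Suc k)" "step (Suc k) \<le> 1" "step (Suc k) - step k \<le> \<delta>/2"
      unfolding step_def using \<delta>(1) by (auto simp: min_def field_simps)
    then have "dist (\<alpha> (step (Suc k))) (\<alpha> (step k)) < 1/2"
      using \<delta> by (intro \<delta>(2)) (auto simp: dist_real_def)
    moreover have "\<alpha> (step (Suc k)) = \<alpha> (step k) + integral {step k..step (Suc k)} (\<lambda>t. matrix_abs_sum (K t))"
      unfolding \<alpha>_def using bounds
      by (intro Henstock_Kurzweil_Integration.integral_combine[symmetric])
         (auto intro: integrable_on_subinterval[OF K_int])
    ultimately have "integral {step k..step (Suc k)} (\<lambda>t. matrix_abs_sum (K t)) \<le> 1/2"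
      by (simp add: dist_real_def)
    moreover have "(\<lambda>t. K t $ i $ j) absolutely_integrable_on {0..step (Suc k)}" for i j
      using absolutely_integrable_on_subinterval[OF K] bounds by auto
    moreover have "continuous_on {0..step (Suc k)} g"
      using continuous_on_subset[OF g] bounds by auto
    ultimately show ?case
      using Suc volterra_extend_solution[where c = "step k" and d = "step (Suc k)"] bounds
      unfolding solvable_def by blast
  qed
  moreover obtain k where "1 \<le> real k * \<delta> / 2"
    using reals_Archimedean3[of "\<delta>/2"] \<delta>(1)
    by (metis half_gt_zero less_eq_real_def mult.commute times_divide_eq_right)
  ultimately have "solvable 1" unfolding step_def by (metis min.absorb1)
  then show ?thesis unfolding solvable_def .
qed

section \<open>State equation, adjoint equation and their duality\<close>

lemma linear_state_solution_exists:
  fixes A :: "real \<Rightarrow> real^'n^'n" and h :: "real \<Rightarrow> real^'n"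
  assumes A: "\<And>i j. (\<lambda>t. A t $ i $ j) absolutely_integrable_on {0..1}"
    and h: "h absolutely_integrable_on {0..1}"
  shows "\<exists>x. (\<lambda>r. A r *v x r + h r) absolutely_integrable_on {0..1}
           \<and> (\<forall>s\<in>{0..1}. x s = x_init + integral {0..s} (\<lambda>r. A r *v x r + h r))"
proof -
  note integrable = set_lebesgue_integral_eq_integral(1)
  have "continuous_on {0..1} (\<lambda>s. x_init + integral {0..s} h)"
    using indefinite_integral_continuous_1[OF integrable[OF h]] by (intro continuous_intros)
  then obtain x where x: "continuous_on {0..1} x"
    "\<forall>s\<in>{0..1}. x s = (x_init + integral {0..s} h) + integral {0..s} (\<lambda>r. A r *v x r)"
    using volterra_solution_exists[OF A] by blast
  have Ax: "(\<lambda>r. A r *v x r) absolutely_integrable_on {0..a}" if "a \<le> 1" for a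
    using absolutely_integrable_matrix_vector[OF absolutely_integrable_on_subinterval[OF A]
        continuous_on_subset[OF x(1)]] that by auto
  have "x s = x_init + integral {0..s} (\<lambda>r. A r *v x r + h r)" if s: "s \<in> {0..1}" for s
  proof -
    have "integral {0..s} (\<lambda>r. A r *v x r + h r) = integral {0..s} (\<lambda>r. A r *v x r) + integral {0..s} h"
      using s by (intro integral_add integrable[OF Ax] integrable[OF absolutely_integrable_on_subinterval[OF h]]) auto
    then show ?thesis using x(2) s by (simp add: algebra_simps)
  qed
  moreover have "(\<lambda>r. A r *v x r + h r) absolutely_integrable_on {0..1}"
    using Ax[of 1] h by (intro set_integral_add) auto
  ultimately show ?thesis by blast
qed

lemma has_integral_reflect_one:
  fixes f :: "real \<Rightarrow> 'b::real_normed_vector"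
  assumes "(f has_integral i) {a..b}"
  shows "((\<lambda>x. f (1 - x)) has_integral i) {1-b..1-a}"
  using has_integral_affinity[of f i a b "-1" 1] assms by (simp add: cbox_interval)

lemma absolutely_integrable_reflect_one:
  fixes F :: "real \<Rightarrow> real"
  assumes "F absolutely_integrable_on {0..1}"
  shows "(\<lambda>t. F (1 - t)) absolutely_integrable_on {0..1}"
  using has_integral_reflect_one[of F _ 0 1] has_integral_reflect_one[of "\<lambda>t. norm (F t)" _ 0 1] assms
  unfolding absolutely_integrable_on_def integrable_on_def by auto

text \<open>The adjoint equation p' = -A^T p, p(1) = e, in integral form.  It is
  solved by reversing time, which turns it into a forward Volterra equation.\<close>
lemma adjoint_solution_exists:
  fixes A :: "real \<Rightarrow> real^'n^'n" and e :: "real^'n"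
  assumes A: "\<And>i j. (\<lambda>t. A t $ i $ j) absolutely_integrable_on {0..1}"
  shows "\<exists>p. continuous_on {0..1} p \<and> (\<lambda>r. transpose (A r) *v p r) absolutely_integrable_on {0..1}
          \<and> (\<forall>s\<in>{0..1}. p s = e + integral {s..1} (\<lambda>r. transpose (A r) *v p r))"
proof -
  define K where "K t = transpose (A (1 - t))" for t
  have "(\<lambda>t. K t $ i $ j) absolutely_integrable_on {0..1}" for i j
    using absolutely_integrable_reflect_one[OF A[of j i]] by (simp add: K_def transpose_def)
  then obtain q where q: "continuous_on {0..1} q"
    "\<forall>s\<in>{0..1}. q s = e + integral {0..s} (\<lambda>r. K r *v q r)"
    using volterra_solution_exists[of K "\<lambda>_. e"] by auto
  define p where "p s = q (1 - s)" for s
  have p_cont: "continuous_on {0..1} p"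
    unfolding p_def by (rule continuous_on_compose2[OF q(1)]) (auto intro!: continuous_intros)
  have Ap_int: "(\<lambda>r. transpose (A r) *v p r) absolutely_integrable_on {0..1}"
    using A by (intro absolutely_integrable_matrix_vector p_cont) (simp add: transpose_def)
  have "p s = e + integral {s..1} (\<lambda>r. transpose (A r) *v p r)" if s: "s \<in> {0..1}" for s
  proof -
    have "(\<lambda>r. transpose (A r) *v p r) integrable_on {s..1}"
      using set_lebesgue_integral_eq_integral(1)[OF absolutely_integrable_on_subinterval[OF Ap_int]] s
      by auto
    from has_integral_reflect_one[OF integrable_integral[OF this]]
    have "integral {0..1-s} (\<lambda>r. K r *v q r) = integral {s..1} (\<lambda>r. transpose (A r) *v p r)"
      by (simp add: K_def p_def integral_unique)
    then show ?thesis using q(2) s by (auto simp: p_def)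
  qed
  with p_cont Ap_int show ?thesis by blast
qed

lemma matrix_vector_inner_transpose: "(K *v x) \<bullet> p = x \<bullet> (transpose K *v p)" for K :: "real^'n^'m"
  by (simp add: inner_vec_def matrix_vector_mult_def transpose_def sum_distrib_left sum_distrib_right
      mult.assoc mult.left_commute) (rule sum.swap)

lemma state_adjoint_pairing:
  fixes A :: "real \<Rightarrow> real^'n^'n" and x p h :: "real \<Rightarrow> real^'n" and e x0 :: "real^'n"
  assumes A: "\<And>i j. (\<lambda>t. A t $ i $ j) absolutely_integrable_on {0..1}"
    and Y_int: "(\<lambda>r. A r *v x r + h r) absolutely_integrable_on {0..1}"
    and x: "\<forall>s\<in>{0..1}. x s = x0 + integral {0..s} (\<lambda>r. A r *v x r + h r)"
    and p_cont: "continuous_on {0..1} p"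
    and P_int: "(\<lambda>r. transpose (A r) *v p r) absolutely_integrable_on {0..1}"
    and p: "\<forall>s\<in>{0..1}. p s = e + integral {s..1} (\<lambda>r. transpose (A r) *v p r)"
  shows "x 1 \<bullet> e = x0 \<bullet> p 0 + integral {0..1} (\<lambda>s. h s \<bullet> p s)"
proof -
  note integrable = set_lebesgue_integral_eq_integral(1)
  define Y where "Y = (\<lambda>r. A r *v x r + h r)"
  define P where "P = (\<lambda>r. transpose (A r) *v p r)"
  have Y_int': "Y absolutely_integrable_on {0..1}" using Y_int by (simp add: Y_def)
  have P_int': "P absolutely_integrable_on {0..1}" using P_int by (simp add: P_def)
  have x_cont: "continuous_on {0..1} x"
  proof -
    have "continuous_on {0..1} (\<lambda>s. x0 + integral {0..s} Y)"
      using indefinite_integral_continuous_1[OF integrable[OF Y_int']] by (intro continuous_intros)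
    then show ?thesis by (rule continuous_on_eq) (use x in \<open>auto simp: Y_def\<close>)
  qed
  have xP: "(\<lambda>s. x s \<bullet> P s) integrable_on {0..1}"
    using integrable[OF absolutely_integrable_continuous_inner[OF P_int' x_cont]] by (simp add: inner_commute)
  have hp: "(\<lambda>s. h s \<bullet> p s) integrable_on {0..1}"
  proof -
    have "h absolutely_integrable_on {0..1}"
      using set_integral_diff(1)[OF Y_int' absolutely_integrable_matrix_vector[OF A x_cont]]
      by (simp add: Y_def)
    from integrable[OF absolutely_integrable_continuous_inner[OF this p_cont]] show ?thesis .
  qed
  have x0P: "(\<lambda>s. x0 \<bullet> P s) integrable_on {0..1}" and "integral {0..1} (\<lambda>s. x0 \<bullet> P s) = x0 \<bullet> integral {0..1} P"
    using integrable_linear[OF integrable[OF P_int'] bounded_linear_inner_right[of x0]]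
      integral_linear[OF integrable[OF P_int'] bounded_linear_inner_right[of x0]] by (simp_all add: o_def)
  \<comment> \<open>Pair Y = x' with p, and use p = e + \<integral>_s^1 P and x - x0 = \<integral>_0^s Y.\<close>
  have "integral {0..1} (\<lambda>s. Y s \<bullet> p s) = integral {0..1} (\<lambda>s. Y s \<bullet> (e + integral {s..1} P))"
    by (intro integral_cong) (use p in \<open>auto simp: P_def\<close>)
  also have "\<dots> = integral {0..1} Y \<bullet> e + integral {0..1} (\<lambda>s. integral {0..s} Y \<bullet> P s)"
    by (rule integral_pairing_by_parts[OF Y_int' P_int'])
  also have "\<dots> = (x 1 - x0) \<bullet> e + integral {0..1} (\<lambda>s. x s \<bullet> P s - x0 \<bullet> P s)"
    using x by (auto simp: Y_def inner_add_left intro!: integral_cong)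
  also have "\<dots> = (x 1 - x0) \<bullet> e + integral {0..1} (\<lambda>s. x s \<bullet> P s) - x0 \<bullet> (p 0 - e)"
    using integral_diff[OF xP x0P] \<open>integral {0..1} (\<lambda>s. x0 \<bullet> P s) = x0 \<bullet> integral {0..1} P\<close> p
    by (auto simp: P_def)
  finally have "integral {0..1} (\<lambda>s. Y s \<bullet> p s)
                = (x 1 - x0) \<bullet> e + integral {0..1} (\<lambda>s. x s \<bullet> P s) - x0 \<bullet> (p 0 - e)" .
  moreover have "integral {0..1} (\<lambda>s. Y s \<bullet> p s)
                 = integral {0..1} (\<lambda>s. x s \<bullet> P s) + integral {0..1} (\<lambda>s. h s \<bullet> p s)"
    by (subst integral_add[OF xP hp, symmetric])
       (auto intro!: integral_cong simp: Y_def P_def inner_add_left matrix_vector_inner_transpose)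
  ultimately show ?thesis by (simp add: inner_diff_left inner_diff_right)
qed

section \<open>Square-integrable functions on [0,1]\<close>

lemma L2_01_iff:
  "L2_01 g \<longleftrightarrow> g \<in> borel_measurable (lebesgue_on {0..1}) \<and> (\<lambda>s. (norm (g s))\<^sup>2) integrable_on {0..1}"
  by (simp add: L2_01_def measurable_on_iff_borel_measurable)

text \<open>The pointwise inner product of two L_2 functions is integrable; this is what
  makes u \<mapsto> \<integral> u \<bullet> g a functional of the weak topology.\<close>
lemma L2_01_inner_absolutely_integrable:
  fixes u g :: "real \<Rightarrow> 'a::euclidean_space"
  assumes u: "L2_01 u" and g: "L2_01 g"
  shows "(\<lambda>s. u s \<bullet> g s) absolutely_integrable_on {0..1}"
proof (rule measurable_bounded_by_integrable_imp_absolutely_integrable)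
  show "(\<lambda>s. u s \<bullet> g s) \<in> borel_measurable (lebesgue_on {0..1})"
    using u g unfolding L2_01_iff by (intro borel_measurable_inner) auto
  show "(\<lambda>s. (norm (u s))\<^sup>2 + (norm (g s))\<^sup>2) integrable_on {0..1}"
    using u g unfolding L2_01_iff by (intro integrable_add) auto
  show "norm (u s \<bullet> g s) \<le> (norm (u s))\<^sup>2 + (norm (g s))\<^sup>2" for s
  proof -
    have "norm (u s) * norm (g s) \<le> (norm (u s))\<^sup>2 + (norm (g s))\<^sup>2"
      using sum_squares_bound[of "norm (u s)" "norm (g s)"] mult_nonneg_nonneg[OF norm_ge_zero[of "u s"] norm_ge_zero[of "g s"]]
      by linarith
    then show ?thesis using Cauchy_Schwarz_ineq2[of "u s" "g s"] by simp
  qed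
qed auto

text \<open>L_2 is closed under sums (by (x + y)^2 \<le> 2 x^2 + 2 y^2) and hence under finite sums.\<close>
lemma L2_01_add:
  fixes a b :: "real \<Rightarrow> 'a::euclidean_space"
  assumes a: "L2_01 a" and b: "L2_01 b"
  shows "L2_01 (\<lambda>s. a s + b s)"
  unfolding L2_01_iff
proof
  show m: "(\<lambda>s. a s + b s) \<in> borel_measurable (lebesgue_on {0..1})"
    using a b unfolding L2_01_iff by (intro borel_measurable_add) auto
  show "(\<lambda>s. (norm (a s + b s))\<^sup>2) integrable_on {0..1}"
  proof (rule measurable_bounded_by_integrable_imp_integrable)
    show "(\<lambda>s. (norm (a s + b s))\<^sup>2) \<in> borel_measurable (lebesgue_on {0..1})"
      using m by measurable
    show "(\<lambda>s. 2 * (norm (a s))\<^sup>2 + 2 * (norm (b s))\<^sup>2) integrable_on {0..1}"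
      using a b unfolding L2_01_iff by (intro integrable_add integrable_on_cmult_left) auto
    show "norm ((norm (a s + b s))\<^sup>2) \<le> 2 * (norm (a s))\<^sup>2 + 2 * (norm (b s))\<^sup>2" for s
    proof -
      have "(norm (a s + b s))\<^sup>2 \<le> (norm (a s) + norm (b s))\<^sup>2"
        by (simp add: norm_triangle_ineq power_mono)
      also have "\<dots> \<le> 2 * (norm (a s))\<^sup>2 + 2 * (norm (b s))\<^sup>2"
        using sum_squares_bound[of "norm (a s)" "norm (b s)"] by (simp add: power2_sum)
      finally show ?thesis by simp
    qed
  qed auto
qed

lemma L2_01_sum:
  fixes a :: "'i \<Rightarrow> real \<Rightarrow> 'a::euclidean_space"
  assumes "\<And>i. i \<in> I \<Longrightarrow> L2_01 (a i)"
  shows "L2_01 (\<lambda>s. \<Sum>i\<in>I. a i s)"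
proof (cases "finite I")
  case True
  have "L2_01 (\<lambda>s. 0 :: 'a)" by (simp add: L2_01_iff integrable_0)
  with True assms show ?thesis by (induction I rule: finite_induct) (auto intro: L2_01_add)
qed (simp add: L2_01_iff integrable_0)

lemma L2_01_bounded_multiplier:
  fixes g :: "real \<Rightarrow> 'a::euclidean_space" and c :: "real \<Rightarrow> real"
  assumes g: "L2_01 g" and c: "c \<in> borel_measurable (lebesgue_on {0..1})"
    and C: "\<And>s. s \<in> {0..1} \<Longrightarrow> \<bar>c s\<bar> \<le> C"
  shows "L2_01 (\<lambda>s. c s *\<^sub>R g s)"
  unfolding L2_01_iff
proof
  show m: "(\<lambda>s. c s *\<^sub>R g s) \<in> borel_measurable (lebesgue_on {0..1})"
    using g c unfolding L2_01_iff by (intro borel_measurable_scaleR) auto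
  show "(\<lambda>s. (norm (c s *\<^sub>R g s))\<^sup>2) integrable_on {0..1}"
  proof (rule measurable_bounded_by_integrable_imp_integrable)
    show "(\<lambda>s. (norm (c s *\<^sub>R g s))\<^sup>2) \<in> borel_measurable (lebesgue_on {0..1})"
      using m by measurable
    show "(\<lambda>s. C\<^sup>2 * (norm (g s))\<^sup>2) integrable_on {0..1}"
      using g unfolding L2_01_iff by (auto intro!: integrable_on_mult_right)
    show "norm ((norm (c s *\<^sub>R g s))\<^sup>2) \<le> C\<^sup>2 * (norm (g s))\<^sup>2" if "s \<in> {0..1}" for s
    proof -
      have "(c s)\<^sup>2 \<le> C\<^sup>2" using C[OF that] by (metis abs_ge_zero power2_abs power_mono)
      then show ?thesis by (simp add: power_mult_distrib mult_right_mono)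
    qed
  qed auto
qed

lemma L2_01_components:
  fixes g :: "real \<Rightarrow> real^'m"
  assumes "\<And>l. L2_01 (\<lambda>s. g s $ l)"
  shows "L2_01 g"
proof -
  have comp: "(\<lambda>s. g s $ l) \<in> borel_measurable (lebesgue_on {0..1})"
    "(\<lambda>s. (g s $ l)\<^sup>2) integrable_on {0..1}" for l
    using assms[of l] by (auto simp: L2_01_iff)
  have "g \<in> borel_measurable (lebesgue_on {0..1})"
  proof (subst borel_measurable_euclidean_space, intro ballI)
    fix b :: "real^'m" assume "b \<in> Basis"
    then obtain l where "b = axis l 1" by (auto simp: Basis_vec_def)
    then show "(\<lambda>s. g s \<bullet> b) \<in> borel_measurable (lebesgue_on {0..1})"
      using comp(1)[of l] by (simp add: inner_axis)
  qed
  moreover have "(norm (g s))\<^sup>2 = (\<Sum>l\<in>UNIV. (g s $ l)\<^sup>2)" for s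
    unfolding power2_norm_eq_inner by (simp add: inner_vec_def power2_eq_square)
  ultimately show ?thesis
    using comp(2) by (simp add: L2_01_iff integrable_sum)
qed

lemma L2_01_transpose_continuous:
  fixes B :: "real \<Rightarrow> real^'m^'n" and p :: "real \<Rightarrow> real^'n"
  assumes B: "\<And>i j. L2_01 (\<lambda>t. B t $ i $ j)" and p: "continuous_on {0..1} p"
  shows "L2_01 (\<lambda>s. transpose (B s) *v p s)"
proof -
  obtain C where C: "\<forall>y\<in>p ` {0..1}. norm y \<le> C"
    using compact_imp_bounded[OF compact_continuous_image[OF p compact_Icc]] by (auto simp: bounded_iff)
  have "L2_01 (\<lambda>s. p s $ j *\<^sub>R B s $ j)" for j
  proof (rule L2_01_bounded_multiplier)
    show "L2_01 (\<lambda>s. B s $ j)" using B by (intro L2_01_components)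
    show "(\<lambda>s. p s $ j) \<in> borel_measurable (lebesgue_on {0..1})"
      using p by (intro continuous_imp_measurable_on_sets_lebesgue continuous_intros) auto
    show "\<bar>p s $ j\<bar> \<le> C" if "s \<in> {0..1}" for s
      using that C component_le_norm_cart[of "p s" j] by (meson image_eqI order_trans)
  qed
  then have "L2_01 (\<lambda>s. \<Sum>j\<in>UNIV. p s $ j *\<^sub>R B s $ j)" by (rule L2_01_sum)
  moreover have "transpose (B s) *v p s = (\<Sum>j\<in>UNIV. p s $ j *\<^sub>R B s $ j)" for s
    by (auto simp: vec_eq_iff matrix_vector_mult_def transpose_def mult.commute)
  ultimately show ?thesis by simp
qed

lemma weak_L2_openin_functional:
  assumes "L2_01 g" and "open W"
  shows "openin weak_L2_topology {u. integral {0..1} (\<lambda>s. u s \<bullet> g s) \<in> W}"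
  unfolding weak_L2_topology_def by (rule topology_generated_by_Basis) (use assms in blast)

section \<open>Probabilities of closed events\<close>

text \<open>If Z_j \<rightarrow> Z pointwise and the events Z_j \<in> Q have probability at least c,
  then so has Z \<in> Q, for closed Q (the limit superior of the events lies in it).\<close>
lemma prob_closed_event_limit:
  fixes Z :: "'a \<Rightarrow> 'b::topological_space" and Zs :: "nat \<Rightarrow> 'a \<Rightarrow> 'b"
  assumes "prob_space M" and closed: "closed Q"
    and meas: "\<And>j. {\<omega> \<in> space M. Zs j \<omega> \<in> Q} \<in> sets M" "{\<omega> \<in> space M. Z \<omega> \<in> Q} \<in> sets M"
    and lim: "\<And>\<omega>. \<omega> \<in> space M \<Longrightarrow> (\<lambda>j. Zs j \<omega>) \<longlonglongrightarrow> Z \<omega>"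
    and ge: "\<And>j. c \<le> measure M {\<omega> \<in> space M. Zs j \<omega> \<in> Q}"
  shows "c \<le> measure M {\<omega> \<in> space M. Z \<omega> \<in> Q}"
proof -
  interpret prob_space M by fact
  define E where "E j = {\<omega> \<in> space M. Zs j \<omega> \<in> Q}" for j
  define F where "F m = (\<Union>j\<in>{m..}. E j)" for m
  have F_sets: "F m \<in> sets M" for m unfolding F_def E_def using meas by auto
  have limsup: "(\<Inter>m. F m) \<subseteq> {\<omega> \<in> space M. Z \<omega> \<in> Q}"
  proof safe
    fix \<omega> assume \<omega>: "\<omega> \<in> (\<Inter>m. F m)"
    then show \<omega>_space: "\<omega> \<in> space M" by (auto simp: F_def E_def)
    have often: "\<exists>\<^sub>F j in sequentially. Zs j \<omega> \<in> Q"
      using \<omega> unfolding frequently_sequentially F_def E_def by blast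
    show "Z \<omega> \<in> Q"
    proof (rule ccontr)
      assume "Z \<omega> \<notin> Q"
      then have "\<forall>\<^sub>F j in sequentially. Zs j \<omega> \<in> - Q"
        using topological_tendstoD[OF lim[OF \<omega>_space] open_Compl[OF closed]] by blast
      with often show False by (simp add: frequently_def)
    qed
  qed
  have "(\<lambda>m. measure M (F m)) \<longlonglongrightarrow> measure M (\<Inter>m. F m)"
    using F_sets by (intro finite_Lim_measure_decseq) (auto simp: decseq_def F_def intro: order_trans)
  moreover have "c \<le> measure M (F m)" for m
    using ge[of m] finite_measure_mono[of "E m" "F m"] F_sets by (force simp: F_def E_def)
  ultimately have "c \<le> measure M (\<Inter>m. F m)"
    by (intro LIMSEQ_le_const) auto
  also have "\<dots> \<le> measure M {\<omega> \<in> space M. Z \<omega> \<in> Q}"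
    by (rule finite_measure_mono[OF limsup meas(2)])
  finally show ?thesis .
qed

lemma prob_affine_event_usc:
  fixes \<xi> :: "'i \<Rightarrow> 'a \<Rightarrow> real" and a :: "real^'n" and w :: "'i \<Rightarrow> real^'n"
  assumes P: "prob_space M" and I: "finite I" and \<xi>: "\<And>i. i \<in> I \<Longrightarrow> \<xi> i \<in> borel_measurable M"
    and Q: "Q \<in> sets borel" "closed Q"
    and less: "measure M {\<omega> \<in> space M. a + (\<Sum>i\<in>I. \<xi> i \<omega> *\<^sub>R w i) \<in> Q} < c"
  shows "\<exists>\<epsilon>>0. \<forall>w'. (\<forall>i\<in>I. \<forall>k. \<bar>w' i $ k - w i $ k\<bar> < \<epsilon>) \<longrightarrow>
            measure M {\<omega> \<in> space M. a + (\<Sum>i\<in>I. \<xi> i \<omega> *\<^sub>R w' i) \<in> Q} < c"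
proof (rule ccontr)
  define Z where "Z v \<omega> = a + (\<Sum>i\<in>I. \<xi> i \<omega> *\<^sub>R v i)" for v :: "'i \<Rightarrow> real^'n" and \<omega>
  have meas: "{\<omega> \<in> space M. Z v \<omega> \<in> Q} \<in> sets M" for v
  proof -
    have "Z v \<in> borel_measurable M"
      unfolding Z_def using \<xi> by measurable
    from measurable_sets[OF this Q(1)] show ?thesis by (simp add: vimage_def Int_def conj_commute)
  qed
  assume neg: "\<not> ?thesis"
  have "\<exists>v. (\<forall>i\<in>I. \<forall>k. \<bar>v i $ k - w i $ k\<bar> < 1 / Suc m)
             \<and> \<not> measure M {\<omega> \<in> space M. Z v \<omega> \<in> Q} < c" for m :: nat
  proof -
    have "(0::real) < 1 / Suc m" by simp
    with neg show ?thesis unfolding Z_def by blast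
  qed
  then obtain ws where ws: "\<forall>m::nat. (\<forall>i\<in>I. \<forall>k. \<bar>ws m i $ k - w i $ k\<bar> < 1 / Suc m)
                              \<and> \<not> measure M {\<omega> \<in> space M. Z (ws m) \<omega> \<in> Q} < c"
    by metis
  then have close: "\<And>m i k. i \<in> I \<Longrightarrow> \<bar>ws m i $ k - w i $ k\<bar> < 1 / Suc m"
    and ge: "\<And>m. c \<le> measure M {\<omega> \<in> space M. Z (ws m) \<omega> \<in> Q}"
    by (simp_all add: not_less)
  have conv: "(\<lambda>m. ws m i) \<longlonglongrightarrow> w i" if i: "i \<in> I" for i
  proof (rule vec_tendstoI)
    fix k
    have "(\<lambda>m. ws m i $ k - w i $ k) \<longlonglongrightarrow> 0"
    proof (rule Lim_null_comparison)
      show "\<forall>\<^sub>F m in sequentially. norm (ws m i $ k - w i $ k) \<le> 1 / real (Suc m)"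
        using close[OF i] by (intro always_eventually allI) (simp add: less_imp_le)
      show "(\<lambda>m. 1 / real (Suc m)) \<longlonglongrightarrow> 0"
        by (rule LIMSEQ_Suc[OF lim_const_over_n[of 1]])
    qed
    then show "((\<lambda>m. ws m i $ k) \<longlongrightarrow> w i $ k) sequentially"
      by (simp add: LIM_zero_iff)
  qed
  have "(\<lambda>m. Z (ws m) \<omega>) \<longlonglongrightarrow> Z w \<omega>" for \<omega>
    unfolding Z_def by (intro tendsto_intros conv)
  then have "c \<le> measure M {\<omega> \<in> space M. Z w \<omega> \<in> Q}"
    by (intro prob_closed_event_limit[OF P Q(2) meas meas _ ge])
  with less show False by (simp add: Z_def)
qed

section \<open>Maxima of upper semicontinuous functions\<close>

lemma compactin_usc_attains_max:
  fixes \<phi> :: "'a \<Rightarrow> real"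
  assumes compact: "compactin X S" and "S \<noteq> {}"
    and usc: "\<And>u c. u \<in> S \<Longrightarrow> \<phi> u < c \<Longrightarrow> \<exists>U. openin X U \<and> u \<in> U \<and> (\<forall>v\<in>S \<inter> U. \<phi> v < c)"
  shows "\<exists>u0\<in>S. \<forall>u\<in>S. \<phi> u \<le> \<phi> u0"
proof (rule ccontr)
  assume "\<not> ?thesis"
  then have "\<forall>v\<in>S. \<exists>w. w \<in> S \<and> \<phi> v < \<phi> w" by (auto simp: not_le)
  then obtain \<sigma> where \<sigma>: "\<forall>v\<in>S. \<sigma> v \<in> S \<and> \<phi> v < \<phi> (\<sigma> v)"
    by (rule bchoice[THEN exE])
  have "\<forall>v\<in>S. \<exists>U. openin X U \<and> v \<in> U \<and> (\<forall>w\<in>S \<inter> U. \<phi> w < \<phi> (\<sigma> v))"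
    using usc \<sigma> by blast
  then obtain U where U: "\<forall>v\<in>S. openin X (U v) \<and> v \<in> U v \<and> (\<forall>w\<in>S \<inter> U v. \<phi> w < \<phi> (\<sigma> v))"
    by (rule bchoice[THEN exE])
  obtain \<F> where "finite \<F>" "\<F> \<subseteq> U ` S" "S \<subseteq> \<Union> \<F>"
    using compactinD[OF compact, of "U ` S"] U by blast
  then obtain T where T: "T \<subseteq> S" "finite T" "S \<subseteq> (\<Union>t\<in>T. U t)"
    using finite_subset_image[of \<F> U S] by blast
  with \<open>S \<noteq> {}\<close> have "T \<noteq> {}" by auto
  \<comment> \<open>The best of the finitely many improvements \<sigma> t is itself improved by some \<sigma> t'.\<close>
  define m where "m = Max ((\<lambda>t. \<phi> (\<sigma> t)) ` T)"
  have m_ge: "\<phi> (\<sigma> t) \<le> m" if "t \<in> T" for t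
    unfolding m_def using T(2) that by (intro Max_ge) auto
  have "m \<in> (\<lambda>t. \<phi> (\<sigma> t)) ` T"
    unfolding m_def using T(2) \<open>T \<noteq> {}\<close> by (intro Max_in) auto
  then obtain s where s: "s \<in> T" "\<phi> (\<sigma> s) = m" by auto
  obtain t where "t \<in> T" "\<sigma> s \<in> U t"
    using T \<sigma> s(1) by blast
  then have "\<phi> (\<sigma> s) < \<phi> (\<sigma> t)"
    using U \<sigma> T(1) s(1) by blast
  with m_ge[OF \<open>t \<in> T\<close>] s(2) show False by simp
qed

section \<open>The terminal state of the controlled system\<close>

lemma xi_proc_indicator:
  "xi_proc N tt \<xi> s \<omega> = (\<Sum>i\<in>{1..N}. \<xi> i \<omega> * indicator {tt (i - 1)..<tt i} s)"
  unfolding xi_proc_def by (intro sum.cong) (auto simp: indicator_def)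

lemma indicator_interval_measurable:
  "(\<lambda>s. indicator {a..<b::real} s :: real) \<in> borel_measurable (lebesgue_on {0..1})"
  by (rule borel_measurable_indicator') (auto simp: sets_restrict_space_iff)

text \<open>For an L_2 control the forcing term xi B u + f is absolutely integrable,
  since xi is a bounded step function of time.\<close>
lemma forcing_absolutely_integrable:
  fixes B :: "real \<Rightarrow> real^'m^'n" and u :: "real \<Rightarrow> real^'m" and f :: "real \<Rightarrow> real^'n"
  assumes B: "\<And>i j. L2_01 (\<lambda>t. B t $ i $ j)" and u: "L2_01 u"
    and f: "\<And>i. (\<lambda>t. f t $ i) absolutely_integrable_on {0..1}"
  shows "(\<lambda>r. xi_proc N tt \<xi> r \<omega> *\<^sub>R (B r *v u r) + f r) absolutely_integrable_on {0..1}"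
proof -
  have "(\<lambda>r. B r $ i \<bullet> u r) absolutely_integrable_on {0..1}" for i
    using B by (intro L2_01_inner_absolutely_integrable L2_01_components u)
  then have Bu: "(\<lambda>r. B r *v u r) absolutely_integrable_on {0..1}"
    by (subst absolutely_integrable_on_iff_component) (auto simp: matrix_vector_mult_def inner_vec_def)
  have "(\<lambda>r. xi_proc N tt \<xi> r \<omega>) \<in> borel_measurable (lebesgue_on {0..1})"
    unfolding xi_proc_indicator by (intro borel_measurable_sum borel_measurable_times
        borel_measurable_const indicator_interval_measurable)
  moreover have "bounded ((\<lambda>r. xi_proc N tt \<xi> r \<omega>) ` {0..1})"
  proof -
    have "\<bar>xi_proc N tt \<xi> r \<omega>\<bar> \<le> (\<Sum>i\<in>{1..N}. \<bar>\<xi> i \<omega>\<bar>)" for r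
      unfolding xi_proc_indicator
      by (rule order_trans[OF sum_abs sum_mono]) (auto simp: abs_mult indicator_def)
    then show ?thesis by (auto simp: bounded_iff)
  qed
  moreover have "bilinear (\<lambda>c (v::real^'n). c *\<^sub>R v)"
    by (simp add: bilinear_conv_bounded_bilinear bounded_bilinear_scaleR)
  moreover have "f absolutely_integrable_on {0..1}"
    using f by (subst absolutely_integrable_on_iff_component) auto
  ultimately show ?thesis
    using absolutely_integrable_bounded_measurable_product[OF _ _ _ _ Bu]
    by (intro set_integral_add) auto
qed

text \<open>The L_2 weight pairing a control with the i-th random coefficient, built from
  an adjoint solution p.\<close>
definition adjoint_weight ::
  "(nat \<Rightarrow> real) \<Rightarrow> (real \<Rightarrow> real^'m^'n) \<Rightarrow> (real \<Rightarrow> real^'n) \<Rightarrow> nat \<Rightarrow> real \<Rightarrow> real^'m" where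
  "adjoint_weight tt B p i s = indicator {tt (i - 1)..<tt i} s *\<^sub>R (transpose (B s) *v p s)"

text \<open>The weights are square-integrable, so they define weakly continuous functionals.\<close>
lemma L2_01_adjoint_weight:
  assumes B: "\<And>i j. L2_01 (\<lambda>t. B t $ i $ j)" and p: "continuous_on {0..1} p"
  shows "L2_01 (adjoint_weight tt B p i)"
  unfolding adjoint_weight_def[abs_def]
  by (rule L2_01_bounded_multiplier[where C = 1, OF L2_01_transpose_continuous[OF B p]
        indicator_interval_measurable]) (simp add: indicator_def)

lemma forcing_adjoint_integral:
  fixes B :: "real \<Rightarrow> real^'m^'n" and u :: "real \<Rightarrow> real^'m" and f p :: "real \<Rightarrow> real^'n"
  assumes B: "\<And>i j. L2_01 (\<lambda>t. B t $ i $ j)" and u: "L2_01 u"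
    and f: "\<And>i. (\<lambda>t. f t $ i) absolutely_integrable_on {0..1}" and p: "continuous_on {0..1} p"
  shows "integral {0..1} (\<lambda>s. (xi_proc N tt \<xi> s \<omega> *\<^sub>R (B s *v u s) + f s) \<bullet> p s)
         = integral {0..1} (\<lambda>s. f s \<bullet> p s)
           + (\<Sum>i\<in>{1..N}. \<xi> i \<omega> * integral {0..1} (\<lambda>s. u s \<bullet> adjoint_weight tt B p i s))"
proof -
  note integrable = set_lebesgue_integral_eq_integral(1)
  have f_int: "(\<lambda>s. f s \<bullet> p s) integrable_on {0..1}"
    using f by (intro integrable absolutely_integrable_continuous_inner p)
       (subst absolutely_integrable_on_iff_component, auto)
  have w_int: "(\<lambda>s. u s \<bullet> adjoint_weight tt B p i s) integrable_on {0..1}" for i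
    by (intro integrable L2_01_inner_absolutely_integrable u L2_01_adjoint_weight B p)
  have pointwise: "(xi_proc N tt \<xi> s \<omega> *\<^sub>R (B s *v u s) + f s) \<bullet> p s
         = f s \<bullet> p s + (\<Sum>i\<in>{1..N}. \<xi> i \<omega> * (u s \<bullet> adjoint_weight tt B p i s))" for s
  proof -
    have "(xi_proc N tt \<xi> s \<omega> *\<^sub>R (B s *v u s)) \<bullet> p s
          = xi_proc N tt \<xi> s \<omega> * (u s \<bullet> (transpose (B s) *v p s))"
      by (simp add: matrix_vector_inner_transpose)
    also have "\<dots> = (\<Sum>i\<in>{1..N}. \<xi> i \<omega> * (u s \<bullet> adjoint_weight tt B p i s))"
      unfolding xi_proc_indicator adjoint_weight_def inner_scaleR_right sum_distrib_right
      by (intro sum.cong refl) (simp only: mult_ac)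
    finally show ?thesis by (simp add: inner_add_left add.commute)
  qed
  have sum_int: "(\<lambda>s. \<Sum>i\<in>{1..N}. \<xi> i \<omega> * (u s \<bullet> adjoint_weight tt B p i s)) integrable_on {0..1}"
    by (intro integrable_sum integrable_on_mult_right w_int) simp
  have "integral {0..1} (\<lambda>s. \<Sum>i\<in>{1..N}. \<xi> i \<omega> * (u s \<bullet> adjoint_weight tt B p i s))
        = (\<Sum>i\<in>{1..N}. \<xi> i \<omega> * integral {0..1} (\<lambda>s. u s \<bullet> adjoint_weight tt B p i s))"
    by (subst integral_sum) (auto intro: integrable_on_mult_right w_int)
  then show ?thesis
    unfolding pointwise integral_add[OF f_int sum_int] by simp
qed

lemma is_solution_iff:
  "is_solution N tt \<xi> A B f x_init u \<omega> x \<longleftrightarrow>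
     (\<lambda>r. A r *v x r + (xi_proc N tt \<xi> r \<omega> *\<^sub>R (B r *v u r) + f r)) absolutely_integrable_on {0..1}
     \<and> (\<forall>s\<in>{0..1}. x s = x_init + integral {0..s} (\<lambda>r. A r *v x r + (xi_proc N tt \<xi> r \<omega> *\<^sub>R (B r *v u r) + f r)))"
  by (simp add: is_solution_def Let_def add.assoc)

lemma solution_exists:
  fixes A :: "real \<Rightarrow> real^'n^'n" and B :: "real \<Rightarrow> real^'m^'n" and f :: "real \<Rightarrow> real^'n"
  assumes A: "\<And>i j. (\<lambda>t. A t $ i $ j) absolutely_integrable_on {0..1}"
    and B: "\<And>i j. L2_01 (\<lambda>t. B t $ i $ j)"
    and f: "\<And>i. (\<lambda>t. f t $ i) absolutely_integrable_on {0..1}"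
    and u: "L2_01 u"
  shows "\<exists>x. is_solution N tt \<xi> A B f x_init u \<omega> x"
  using linear_state_solution_exists[OF A forcing_absolutely_integrable[OF B u f,
        where N = N and tt = tt and \<xi> = \<xi> and \<omega> = \<omega>], where x_init = x_init]
  unfolding is_solution_iff by blast

lemma terminal_state_eqI:
  assumes "is_solution N tt \<xi> A B f x_init u \<omega> x"
    and "\<And>y. is_solution N tt \<xi> A B f x_init u \<omega> y \<Longrightarrow> y 1 = v"
  shows "terminal_state N tt \<xi> A B f x_init u \<omega> = v"
  unfolding terminal_state_def
proof (rule the_equality)
  show "\<exists>y. is_solution N tt \<xi> A B f x_init u \<omega> y \<and> y 1 = v"
    using assms by blast
next
  fix z assume "\<exists>y. is_solution N tt \<xi> A B f x_init u \<omega> y \<and> y 1 = z"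
  with assms(2) show "z = v" by blast
qed

lemma solution_terminal_pairing:
  fixes A :: "real \<Rightarrow> real^'n^'n" and B :: "real \<Rightarrow> real^'m^'n" and f p :: "real \<Rightarrow> real^'n"
  assumes A: "\<And>i j. (\<lambda>t. A t $ i $ j) absolutely_integrable_on {0..1}"
    and B: "\<And>i j. L2_01 (\<lambda>t. B t $ i $ j)"
    and f: "\<And>i. (\<lambda>t. f t $ i) absolutely_integrable_on {0..1}"
    and u: "L2_01 u" and y: "is_solution N tt \<xi> A B f x_init u \<omega> y"
    and p_cont: "continuous_on {0..1} p"
    and P_int: "(\<lambda>r. transpose (A r) *v p r) absolutely_integrable_on {0..1}"
    and p: "\<forall>s\<in>{0..1}. p s = e + integral {s..1} (\<lambda>r. transpose (A r) *v p r)"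
  shows "y 1 \<bullet> e = x_init \<bullet> p 0 + integral {0..1} (\<lambda>s. f s \<bullet> p s)
           + (\<Sum>i\<in>{1..N}. \<xi> i \<omega> * integral {0..1} (\<lambda>s. u s \<bullet> adjoint_weight tt B p i s))"
proof -
  have "y 1 \<bullet> e = x_init \<bullet> p 0
        + integral {0..1} (\<lambda>s. (xi_proc N tt \<xi> s \<omega> *\<^sub>R (B s *v u s) + f s) \<bullet> p s)"
    using y unfolding is_solution_iff by (intro state_adjoint_pairing[OF A _ _ p_cont P_int p]) auto
  then show ?thesis
    by (simp add: forcing_adjoint_integral[OF B u f p_cont] add.assoc)
qed

text \<open>The weights
  come from the adjoint equation with the unit vectors as terminal values.\<close>
lemma terminal_state_affine:
  fixes A :: "real \<Rightarrow> real^'n^'n" and B :: "real \<Rightarrow> real^'m^'n" and f :: "real \<Rightarrow> real^'n"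
  assumes A: "\<And>i j. (\<lambda>t. A t $ i $ j) absolutely_integrable_on {0..1}"
    and B: "\<And>i j. L2_01 (\<lambda>t. B t $ i $ j)"
    and f: "\<And>i. (\<lambda>t. f t $ i) absolutely_integrable_on {0..1}"
  shows "\<exists>a0 G. (\<forall>k i. L2_01 (G k i)) \<and> (\<forall>u \<omega>. L2_01 u \<longrightarrow> terminal_state N tt \<xi> A B f x_init u \<omega>
            = a0 + (\<Sum>i\<in>{1..N}. \<xi> i \<omega> *\<^sub>R (\<chi> k. integral {0..1} (\<lambda>s. (u s :: real^'m) \<bullet> G k i s))))"
proof -
  have "\<forall>k. \<exists>p. continuous_on {0..1} p \<and> (\<lambda>r. transpose (A r) *v p r) absolutely_integrable_on {0..1}
          \<and> (\<forall>s\<in>{0..1}. p s = axis k 1 + integral {s..1} (\<lambda>r. transpose (A r) *v p r))"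
    using adjoint_solution_exists[OF A] by blast
  then obtain pp where pp: "\<forall>k. continuous_on {0..1} (pp k)
      \<and> (\<lambda>r. transpose (A r) *v pp k r) absolutely_integrable_on {0..1}
      \<and> (\<forall>s\<in>{0..1}. pp k s = axis k 1 + integral {s..1} (\<lambda>r. transpose (A r) *v pp k r))"
    by (rule choice[THEN exE])
  define a0 where "a0 = (\<chi> k. x_init \<bullet> pp k 0 + integral {0..1} (\<lambda>s. f s \<bullet> pp k s))"
  define G where "G k = adjoint_weight tt B (pp k)" for k
  have G: "L2_01 (G k i)" for k i
    unfolding G_def using pp B by (intro L2_01_adjoint_weight) auto
  have "terminal_state N tt \<xi> A B f x_init u \<omega>
        = a0 + (\<Sum>i\<in>{1..N}. \<xi> i \<omega> *\<^sub>R (\<chi> k. integral {0..1} (\<lambda>s. u s \<bullet> G k i s)))"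
    if u: "L2_01 u" for u \<omega>
  proof (rule terminal_state_eqI)
    show "is_solution N tt \<xi> A B f x_init u \<omega> (SOME x. is_solution N tt \<xi> A B f x_init u \<omega> x)"
      using solution_exists[OF A B f u] by (rule someI_ex)
    fix y assume y: "is_solution N tt \<xi> A B f x_init u \<omega> y"
    have "y 1 $ k = a0 $ k + (\<Sum>i\<in>{1..N}. \<xi> i \<omega> * integral {0..1} (\<lambda>s. u s \<bullet> G k i s))" for k
      using solution_terminal_pairing[OF A B f u y, of "pp k" "axis k 1"] pp
      by (simp add: inner_axis a0_def G_def add.assoc)
    then show "y 1 = a0 + (\<Sum>i\<in>{1..N}. \<xi> i \<omega> *\<^sub>R (\<chi> k. integral {0..1} (\<lambda>s. u s \<bullet> G k i s)))"
      by (simp add: vec_eq_iff sum_component)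
  qed
  with G show ?thesis by blast
qed

section \<open>Existence of an optimal control\<close>

text \<open>The cost functional is weakly upper semicontinuous on the admissible controls:
  it factors through finitely many weakly continuous functionals, on which the
  probability of the closed target event is upper semicontinuous.\<close>
lemma cost_weakly_upper_semicontinuous:
  fixes A :: "real \<Rightarrow> real^'n^'n" and B :: "real \<Rightarrow> real^'m^'n" and f :: "real \<Rightarrow> real^'n"
  assumes P: "prob_space M" and N: "N \<ge> 1" and \<xi>: "\<And>i. i \<in> {1..N} \<Longrightarrow> \<xi> i \<in> borel_measurable M"
    and A: "\<And>i j. (\<lambda>t. A t $ i $ j) absolutely_integrable_on {0..1}"
    and B: "\<And>i j. L2_01 (\<lambda>t. B t $ i $ j)"
    and f: "\<And>i. (\<lambda>t. f t $ i) absolutely_integrable_on {0..1}"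
    and Q: "Q \<in> sets borel" "closed Q"
    and u: "u \<in> admissible V" and less: "cost M N tt \<xi> A B f x0 Q u < c"
  shows "\<exists>U. openin weak_L2_topology U \<and> u \<in> U \<and> (\<forall>v\<in>admissible V \<inter> U. cost M N tt \<xi> A B f x0 Q v < c)"
proof -
  obtain a0 G where G: "\<forall>k i. L2_01 (G k i)"
    and repr: "\<forall>v \<omega>. L2_01 v \<longrightarrow> terminal_state N tt \<xi> A B f x0 v \<omega>
                 = a0 + (\<Sum>i\<in>{1..N}. \<xi> i \<omega> *\<^sub>R (\<chi> k. integral {0..1} (\<lambda>s. v s \<bullet> G k i s)))"
    using terminal_state_affine[OF A B f, where N = N and tt = tt and \<xi> = \<xi> and x_init = x0] by blast
  define W where "W v i = (\<chi> k. integral {0..1} (\<lambda>s. v s \<bullet> G k i s))" for v :: "real \<Rightarrow> real^'m" and i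
  have cost_eq: "cost M N tt \<xi> A B f x0 Q v = measure M {\<omega> \<in> space M. a0 + (\<Sum>i\<in>{1..N}. \<xi> i \<omega> *\<^sub>R W v i) \<in> Q}"
    if "v \<in> admissible V" for v
    using that repr by (simp add: cost_def W_def admissible_def)
  obtain \<epsilon> where "\<epsilon> > 0" and close: "\<And>w'. (\<forall>i\<in>{1..N}. \<forall>k. \<bar>w' i $ k - W u i $ k\<bar> < \<epsilon>) \<Longrightarrow>
      measure M {\<omega> \<in> space M. a0 + (\<Sum>i\<in>{1..N}. \<xi> i \<omega> *\<^sub>R w' i) \<in> Q} < c"
    using prob_affine_event_usc[where I = "{1..N}" and \<xi> = \<xi> and a = a0 and w = "W u" and c = c,
        OF P finite_atLeastAtMost \<xi> Q]
      less cost_eq[OF u] by auto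
  define U where "U = (\<Inter>(i, k)\<in>{1..N} \<times> UNIV. {v. integral {0..1} (\<lambda>s. v s \<bullet> G k i s) \<in> ball (W u i $ k) \<epsilon>})"
  have "openin weak_L2_topology U"
    unfolding U_def using N
    by (intro openin_INT2) (auto intro!: weak_L2_openin_functional G[rule_format] simp del: mem_ball)
  moreover have "u \<in> U"
    using \<open>\<epsilon> > 0\<close> by (simp add: U_def W_def)
  moreover have "cost M N tt \<xi> A B f x0 Q v < c" if v: "v \<in> admissible V" "v \<in> U" for v
  proof -
    have "\<forall>i\<in>{1..N}. \<forall>k. \<bar>W v i $ k - W u i $ k\<bar> < \<epsilon>"
      using v(2) by (auto simp: U_def W_def dist_real_def abs_minus_commute)
    then show ?thesis using close cost_eq[OF v(1)] by simp
  qed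
  ultimately show ?thesis by blast
qed

theorem theorem1:
  fixes M :: "'a measure" and N :: nat and tt :: "nat \<Rightarrow> real"
    and \<xi> :: "nat \<Rightarrow> 'a \<Rightarrow> real"
    and A :: "real \<Rightarrow> real^'n^'n" and B :: "real \<Rightarrow> real^'m^'n" and f :: "real \<Rightarrow> real^'n"
    and x0 :: "real^'n" and Q :: "(real^'n) set" and V :: "(real^'m) set"
  assumes "prob_space M" and "complete_measure M"
    and "N \<ge> 1" and "tt 0 = 0" and "tt N = 1" and "\<And>i. i < N \<Longrightarrow> tt i < tt (Suc i)"
    and "\<And>i. i \<in> {1..N} \<Longrightarrow> \<xi> i \<in> borel_measurable M"
    and "\<And>i j. (\<lambda>t. A t $ i $ j) absolutely_integrable_on {0..1}"
    and "\<And>i j. (\<lambda>t. B t $ i $ j) absolutely_integrable_on {0..1}"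
    and "\<And>i j. L2_01 (\<lambda>t. B t $ i $ j)"
    and "\<And>i. (\<lambda>t. f t $ i) absolutely_integrable_on {0..1}"
    and "Q \<in> sets borel"
    and "admissible V \<noteq> {}"
    and "compactin weak_L2_topology (admissible V)"
    and "closed Q"
  shows "\<exists>u0 \<in> admissible V. \<forall>u \<in> admissible V.
           cost M N tt \<xi> A B f x0 Q u \<le> cost M N tt \<xi> A B f x0 Q u0"
proof (rule compactin_usc_attains_max[OF assms(14,13)])
  fix u c
  assume u: "u \<in> admissible V" and less: "cost M N tt \<xi> A B f x0 Q u < c"
  show "\<exists>U. openin weak_L2_topology U \<and> u \<in> U
               \<and> (\<forall>v\<in>admissible V \<inter> U. cost M N tt \<xi> A B f x0 Q v < c)"
    using cost_weakly_upper_semicontinuous[OF assms(1,3,7,8,10,11,12,15) u less] .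
qed

end
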